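(* Let $\alpha\in(0,1)$, $R>0$, and consider the initial state $(x_O,y_O,y_T)$ at time $0$ of the observer–target system. Let $m=\sqrt{1-\alpha^2}/\alpha$ and let $W=(x_O,y_O-R)$ be the bottom point of the observation disk. If $W$ lies on or above the Decision Line, i.e. $y_O-R-y_T\ge m|x_O|$, then the optimal observation time equals $\frac{2R}{1-\alpha}$ (the state belongs to $\mathscr B_3$).
   Context: Target: position $(0,y_T(t))$, $\dot y_T=1$, $y_T(0)=y_T$. Observer: position $(x_O(t),y_O(t))$ starting at $(x_O,y_O)$, $\dot x_O=\alpha\cos\psi(t)$, $\dot y_O=\alpha\sin\psi(t)$, heading $\psi:[0,\infty)\to\mathbb R$ a measurable control. Observation disk: closed disk of radius $R$ centered at the observer. For a control, $t_2=\inf\{t\ge0:x_O(t)^2+(y_O(t)-y_T(t))^2\le R^2\}$ (contact time), $t_f=\inf\{t\ge t_2:x_O(t)^2+(y_O(t)-y_T(t))^2>R^2\}$, and the observation time is $t_{\text{obs}}=t_f-t_2$ (taken to be $0$ if no contact occurs). The optimal observation time is the supremum of $t_{\text{obs}}$ over all controls. The Decision Line is the union of the two rays $\{(\pm s\alpha,\,y_T+s\sqrt{1-\alpha^2}):s\ge0\}$ from the initial target position, i.e. the set of points $Z$ whose Apollonius circle $\{P:|PZ|=\alpha|PT|\}$ with the target $T$ is tangent to the target's path; "on or above" it means in the region $\{(x,y):y-y_T\ge m|x|\}$. $\mathscr B_3$ denotes the set of states whose optimal observation time equals $2R/(1-\alpha)$. *)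

theory Defs
  imports "HOL-Analysis.Analysis"
begin

text \<open>Observer-target pursuit/observation model. Target at (0, yT + t), observer with
  speed alpha and measurable heading psi. Observer coordinates at time t:\<close>

definition obs_x :: "real \<Rightarrow> real \<Rightarrow> (real \<Rightarrow> real) \<Rightarrow> real \<Rightarrow> real" where
  "obs_x \<alpha> xO \<psi> t = xO + integral {0..t} (\<lambda>s. \<alpha> * cos (\<psi> s))"

definition obs_y :: "real \<Rightarrow> real \<Rightarrow> (real \<Rightarrow> real) \<Rightarrow> real \<Rightarrow> real" where
  "obs_y \<alpha> yO \<psi> t = yO + integral {0..t} (\<lambda>s. \<alpha> * sin (\<psi> s))"

definition sep2 :: "real \<Rightarrow> real \<Rightarrow> real \<Rightarrow> real \<Rightarrow> (real \<Rightarrow> real) \<Rightarrow> real \<Rightarrow> real" where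
  "sep2 \<alpha> xO yO yT \<psi> t = (obs_x \<alpha> xO \<psi> t)\<^sup>2 + (obs_y \<alpha> yO \<psi> t - (yT + t))\<^sup>2"

definition contact_set :: "real \<Rightarrow> real \<Rightarrow> real \<Rightarrow> real \<Rightarrow> real \<Rightarrow> (real \<Rightarrow> real) \<Rightarrow> real set" where
  "contact_set \<alpha> R xO yO yT \<psi> = {t. 0 \<le> t \<and> sep2 \<alpha> xO yO yT \<psi> t \<le> R\<^sup>2}"

definition contact_time :: "real \<Rightarrow> real \<Rightarrow> real \<Rightarrow> real \<Rightarrow> real \<Rightarrow> (real \<Rightarrow> real) \<Rightarrow> real" where
  "contact_time \<alpha> R xO yO yT \<psi> = Inf (contact_set \<alpha> R xO yO yT \<psi>)"

definition exit_set :: "real \<Rightarrow> real \<Rightarrow> real \<Rightarrow> real \<Rightarrow> real \<Rightarrow> (real \<Rightarrow> real) \<Rightarrow> real set" where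
  "exit_set \<alpha> R xO yO yT \<psi> =
     {t. contact_time \<alpha> R xO yO yT \<psi> \<le> t \<and> sep2 \<alpha> xO yO yT \<psi> t > R\<^sup>2}"

definition exit_time :: "real \<Rightarrow> real \<Rightarrow> real \<Rightarrow> real \<Rightarrow> real \<Rightarrow> (real \<Rightarrow> real) \<Rightarrow> real" where
  "exit_time \<alpha> R xO yO yT \<psi> = Inf (exit_set \<alpha> R xO yO yT \<psi>)"

text \<open>Observation time tf - t2 (0 if no contact; \<infinity> if the target is never lost,
  which cannot happen for alpha < 1 but keeps the definition total).\<close>
definition obs_time :: "real \<Rightarrow> real \<Rightarrow> real \<Rightarrow> real \<Rightarrow> real \<Rightarrow> (real \<Rightarrow> real) \<Rightarrow> ereal" where
  "obs_time \<alpha> R xO yO yT \<psi> =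
     (if contact_set \<alpha> R xO yO yT \<psi> = {} then 0
      else if exit_set \<alpha> R xO yO yT \<psi> = {} then \<infinity>
      else ereal (exit_time \<alpha> R xO yO yT \<psi> - contact_time \<alpha> R xO yO yT \<psi>))"

definition opt_obs_time :: "real \<Rightarrow> real \<Rightarrow> real \<Rightarrow> real \<Rightarrow> real \<Rightarrow> ereal" where
  "opt_obs_time \<alpha> R xO yO yT =
     (SUP \<psi> \<in> {\<psi>. \<psi> \<in> borel_measurable lborel}. obs_time \<alpha> R xO yO yT \<psi>)"

end

theory Submission
  imports Defs "HOL-Library.Quadratic_Discriminant"
begin

text \<open>Whatever the heading, the height of the observer relative to the target decreases at rate
  at least \<open>1 - \<alpha>\<close>, so the target crosses the disk, whose vertical extent is \<open>2R\<close>, within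
  time \<open>2R/(1 - \<alpha>)\<close>. If the bottom point \<open>W\<close> of the disk lies on or above the Decision Line,
  the Apollonius equation \<open>x\<^sub>O\<^sup>2 + (t - h)\<^sup>2 = (\<alpha> t)\<^sup>2\<close> with \<open>h = y\<^sub>O - R - y\<^sub>T\<close> has a root
  \<open>t\<^sub>2 \<ge> 0\<close>: moving straight, \<open>W\<close> meets the target at time \<open>t\<^sub>2\<close>, and the target is not seen
  earlier. Heading north from then on, the observer lets the target traverse the whole vertical
  diameter, which takes exactly \<open>2R/(1 - \<alpha>)\<close>.\<close>

lemma integrable_on_Icc_if_bounded_measurable:
  fixes g :: "real \<Rightarrow> real"
  assumes "g \<in> borel_measurable lborel" and "\<And>x. \<bar>g x\<bar> \<le> B"
  shows "g integrable_on {a..b}"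
proof -
  have "integrable lborel (\<lambda>x. indicator {a..b} x *\<^sub>R g x)"
    by (rule integrableI_bounded_set_indicator[where B=B])
      (use assms in \<open>auto simp: emeasure_lborel_Icc_eq\<close>)
  then have "set_integrable lborel {a..b} g" by (simp add: set_integrable_def)
  then show ?thesis by (rule set_borel_integral_eq_integral(1))
qed

lemma integrable_on_Icc_sin_heading:
  fixes \<psi> :: "real \<Rightarrow> real" and \<alpha> :: real
  assumes "\<psi> \<in> borel_measurable lborel"
  shows "(\<lambda>s. \<alpha> * sin (\<psi> s)) integrable_on {a..b}"
proof (rule integrable_on_Icc_if_bounded_measurable)
  show "(\<lambda>s. \<alpha> * sin (\<psi> s)) \<in> borel_measurable lborel"
    using assms by measurable
  show "\<bar>\<alpha> * sin (\<psi> s)\<bar> \<le> \<bar>\<alpha>\<bar>" for s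
    by (simp add: abs_mult mult_left_le)
qed

lemma relative_height_decreases:
  assumes "\<psi> \<in> borel_measurable lborel" and "0 \<le> \<alpha>" and "0 \<le> t" and "t \<le> s"
  shows "obs_y \<alpha> yO \<psi> s - (yT + s) \<le> obs_y \<alpha> yO \<psi> t - (yT + t) - (1 - \<alpha>) * (s - t)"
proof -
  let ?g = "\<lambda>s. \<alpha> * sin (\<psi> s)"
  have int: "?g integrable_on {a..b}" for a b
    using assms(1) by (rule integrable_on_Icc_sin_heading)
  have split: "integral {0..s} ?g = integral {0..t} ?g + integral {t..s} ?g"
    using Henstock_Kurzweil_Integration.integral_combine[OF assms(3,4) int] by simp
  have "integral {t..s} ?g \<le> integral {t..s} (\<lambda>_. \<alpha>)"
    by (rule integral_le[OF int]) (use assms(2) in \<open>auto intro: mult_left_le\<close>)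
  also have "\<dots> = \<alpha> * (s - t)"
    using assms(4) by simp
  finally show ?thesis
    using split unfolding obs_y_def by (simp add: algebra_simps)
qed

lemma relative_height_le_if_seen:
  assumes "sep2 \<alpha> xO yO yT \<psi> t \<le> R\<^sup>2" and "0 \<le> R"
  shows "obs_y \<alpha> yO \<psi> t - (yT + t) \<le> R"
proof -
  have "(obs_y \<alpha> yO \<psi> t - (yT + t))\<^sup>2 \<le> R\<^sup>2"
    using assms(1) zero_le_power2[of "obs_x \<alpha> xO \<psi> t"] unfolding sep2_def by linarith
  then show ?thesis
    using assms(2) by (rule power2_le_imp_le)
qed

lemma unseen_if_relative_height_below:
  assumes "obs_y \<alpha> yO \<psi> t - (yT + t) < - R" and "0 \<le> R"
  shows "R\<^sup>2 < sep2 \<alpha> xO yO yT \<psi> t"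
proof -
  have "R\<^sup>2 < (- (obs_y \<alpha> yO \<psi> t - (yT + t)))\<^sup>2"
    using assms by (intro power_strict_mono) auto
  then show ?thesis
    unfolding sep2_def power2_minus using zero_le_power2[of "obs_x \<alpha> xO \<psi> t"] by linarith
qed

lemma Inf_le_Inf_add_if_tail_subset:
  fixes C E :: "real set"
  assumes "C \<noteq> {}" and "bdd_below E" and "\<And>t s. t \<in> C \<Longrightarrow> t + T < s \<Longrightarrow> s \<in> E"
  shows "E \<noteq> {}" and "Inf E \<le> Inf C + T"
proof -
  have E_bound: "Inf E \<le> t + T" if "t \<in> C" for t
  proof -
    have "Inf E \<le> Inf {t + T<..}"
      by (rule cInf_superset_mono) (use assms(2,3) that in auto)
    then show ?thesis by simp
  qed
  show "E \<noteq> {}"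
    using assms(1,3) by (meson ex_in_conv gt_ex)
  have "Inf E - T \<le> Inf C"
    by (rule cInf_greatest[OF assms(1)]) (use E_bound in force)
  then show "Inf E \<le> Inf C + T" by simp
qed

lemma obs_time_le:
  assumes "\<psi> \<in> borel_measurable lborel" and "0 < \<alpha>" and "\<alpha> < 1" and "0 < R"
  shows "obs_time \<alpha> R xO yO yT \<psi> \<le> ereal (2 * R / (1 - \<alpha>))"
proof -
  define T where "T = 2 * R / (1 - \<alpha>)"
  have T: "(1 - \<alpha>) * T = 2 * R" and T_pos: "0 < T"
    using assms(3,4) by (simp_all add: T_def)
  let ?C = "contact_set \<alpha> R xO yO yT \<psi>"
  let ?E = "exit_set \<alpha> R xO yO yT \<psi>"
  have "?C \<subseteq> {0..}" unfolding contact_set_def by auto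
  then have contact_le: "contact_time \<alpha> R xO yO yT \<psi> \<le> t" if "t \<in> ?C" for t
    unfolding contact_time_def by (meson bdd_below_Ici bdd_below_mono cInf_lower that)
  have leaves: "s \<in> ?E" if t: "t \<in> ?C" and s: "t + T < s" for t s
  proof -
    have "0 \<le> t" and "sep2 \<alpha> xO yO yT \<psi> t \<le> R\<^sup>2"
      using t by (auto simp: contact_set_def)
    then have "obs_y \<alpha> yO \<psi> t - (yT + t) \<le> R"
      using assms(4) by (simp add: relative_height_le_if_seen)
    moreover have "obs_y \<alpha> yO \<psi> s - (yT + s) \<le> obs_y \<alpha> yO \<psi> t - (yT + t) - (1 - \<alpha>) * (s - t)"
      using \<open>0 \<le> t\<close> s T_pos assms by (intro relative_height_decreases) auto
    moreover have "(1 - \<alpha>) * T < (1 - \<alpha>) * (s - t)"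
      using s assms(3) by simp
    ultimately have "R\<^sup>2 < sep2 \<alpha> xO yO yT \<psi> s"
      using T assms(4) by (intro unseen_if_relative_height_below) auto
    moreover have "contact_time \<alpha> R xO yO yT \<psi> \<le> s"
      using contact_le[OF t] s T_pos by linarith
    ultimately show ?thesis
      unfolding exit_set_def by simp
  qed
  show ?thesis
  proof (cases "?C = {}")
    case True
    then show ?thesis
      using assms by (simp add: obs_time_def)
  next
    case False
    have "bdd_below ?E"
      unfolding exit_set_def by (rule bdd_belowI[of _ "contact_time \<alpha> R xO yO yT \<psi>"]) auto
    then have exit_bounds: "?E \<noteq> {}" "Inf ?E \<le> Inf ?C + T"
      using Inf_le_Inf_add_if_tail_subset[of ?C ?E T] False leaves by blast+
    show ?thesis
      using False exit_bounds unfolding obs_time_def exit_time_def contact_time_def T_def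
      by simp
  qed
qed

lemma integral_Icc_step_function:
  fixes a b t t2 :: real
  assumes "0 \<le> t" and "0 \<le> t2"
  shows "integral {0..t} (\<lambda>s. if s \<le> t2 then a else b)
    = (if t \<le> t2 then a * t else a * t2 + b * (t - t2))"
proof (cases "t \<le> t2")
  case True
  have "integral {0..t} (\<lambda>s. if s \<le> t2 then a else b) = integral {0..t} (\<lambda>s. a)"
    by (rule integral_cong) (use True in auto)
  then show ?thesis
    using True assms by simp
next
  case False
  have "((\<lambda>s. a) has_integral (a * t2)) {0..t2}"
    using has_integral_const_real[of a 0 t2] assms by (simp add: mult.commute)
  then have first: "((\<lambda>s. if s \<le> t2 then a else b) has_integral (a * t2)) {0..t2}"
    by (rule has_integral_spike_finite[where S="{t2}", rotated 2]) auto
  have "((\<lambda>s. b) has_integral (b * (t - t2))) {t2..t}"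
    using has_integral_const_real[of b t2 t] False by (simp add: mult.commute)
  then have second: "((\<lambda>s. if s \<le> t2 then a else b) has_integral (b * (t - t2))) {t2..t}"
    by (rule has_integral_spike_finite[where S="{t2}", rotated 2]) auto
  have "((\<lambda>s. if s \<le> t2 then a else b) has_integral (a * t2 + b * (t - t2))) {0..t}"
    by (rule has_integral_combine[OF assms(2) _ first second]) (use False in auto)
  then show ?thesis
    using False by (simp add: integral_unique)
qed

lemma square_less_square_diff_iff:
  fixes R c :: real
  assumes "0 \<le> c" and "0 < R"
  shows "R\<^sup>2 < (R - c)\<^sup>2 \<longleftrightarrow> 2 * R < c"
proof -
  have "R\<^sup>2 < (R - c)\<^sup>2 \<longleftrightarrow> 0 < c * (c - 2 * R)"
    by (simp add: power2_eq_square algebra_simps)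
  also have "\<dots> \<longleftrightarrow> 2 * R < c"
    using assms by (auto simp: zero_less_mult_iff)
  finally show ?thesis .
qed

definition intercept_heading :: "real \<Rightarrow> real \<Rightarrow> real \<Rightarrow> real" where
  "intercept_heading \<theta> t2 s = (if s \<le> t2 then \<theta> else pi / 2)"

lemma intercept_heading_measurable: "intercept_heading \<theta> t2 \<in> borel_measurable lborel"
  unfolding intercept_heading_def by measurable

text \<open>Moving at heading \<open>\<theta>\<close> until time \<open>t2\<close>, the bottom point \<open>W\<close> of the disk reaches the
  target's position \<open>(0, yT + t2)\<close> at that time.\<close>

context
  fixes \<alpha> R xO yO yT t2 \<theta> :: real
  assumes t2_nonneg: "0 \<le> t2"
    and intercept_x: "\<alpha> * t2 * cos \<theta> = - xO"
    and intercept_y: "\<alpha> * t2 * sin \<theta> = t2 - (yO - R - yT)"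
begin

lemma sep2_intercept_before:
  assumes "0 \<le> t" and "t \<le> t2"
  shows "sep2 \<alpha> xO yO yT (intercept_heading \<theta> t2) t
    = (xO + \<alpha> * cos \<theta> * t)\<^sup>2 + (R + (t2 - t) * (1 - \<alpha> * sin \<theta>))\<^sup>2"
proof -
  have "obs_y \<alpha> yO (intercept_heading \<theta> t2) t - (yT + t) = R + (t2 - t) * (1 - \<alpha> * sin \<theta>)"
    using assms t2_nonneg intercept_y
    by (simp add: obs_y_def intercept_heading_def if_distrib integral_Icc_step_function
        algebra_simps)
  moreover have "obs_x \<alpha> xO (intercept_heading \<theta> t2) t = xO + \<alpha> * cos \<theta> * t"
    using assms t2_nonneg
    by (simp add: obs_x_def intercept_heading_def if_distrib integral_Icc_step_function)
  ultimately show ?thesis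
    unfolding sep2_def by simp
qed

lemma sep2_intercept_after:
  assumes "t2 \<le> t"
  shows "sep2 \<alpha> xO yO yT (intercept_heading \<theta> t2) t = (R - (1 - \<alpha>) * (t - t2))\<^sup>2"
proof -
  have "obs_y \<alpha> yO (intercept_heading \<theta> t2) t - (yT + t) = R - (1 - \<alpha>) * (t - t2)"
    using assms t2_nonneg intercept_y
    by (simp add: obs_y_def intercept_heading_def if_distrib integral_Icc_step_function
        algebra_simps)
  moreover have "obs_x \<alpha> xO (intercept_heading \<theta> t2) t = 0"
    using assms t2_nonneg intercept_x
    by (simp add: obs_x_def intercept_heading_def if_distrib integral_Icc_step_function
        algebra_simps)
  ultimately show ?thesis
    unfolding sep2_def by simp
qed

lemma contact_time_intercept:
  assumes "0 \<le> \<alpha>" and "\<alpha> < 1" and "0 \<le> R"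
  shows "t2 \<in> contact_set \<alpha> R xO yO yT (intercept_heading \<theta> t2)"
    and "contact_time \<alpha> R xO yO yT (intercept_heading \<theta> t2) = t2"
proof -
  show t2_contact: "t2 \<in> contact_set \<alpha> R xO yO yT (intercept_heading \<theta> t2)"
    using sep2_intercept_after[of t2] t2_nonneg by (simp add: contact_set_def)
  have climb: "1 - \<alpha> * sin \<theta> > 0"
    using assms(1,2) mult_left_le[of "sin \<theta>" \<alpha>] by simp
  have "R\<^sup>2 < sep2 \<alpha> xO yO yT (intercept_heading \<theta> t2) t" if "0 \<le> t" "t < t2" for t
  proof -
    have "R < R + (t2 - t) * (1 - \<alpha> * sin \<theta>)"
      using that climb by simp
    then have "R\<^sup>2 < (R + (t2 - t) * (1 - \<alpha> * sin \<theta>))\<^sup>2"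
      using assms(3) by (intro power_strict_mono) auto
    then show ?thesis
      using sep2_intercept_before[of t] that zero_le_power2[of "xO + \<alpha> * cos \<theta> * t"]
      by linarith
  qed
  then show "contact_time \<alpha> R xO yO yT (intercept_heading \<theta> t2) = t2"
    unfolding contact_time_def
    by (intro cInf_eq_minimum[OF t2_contact]) (force simp: contact_set_def)
qed

lemma exit_set_intercept:
  assumes "0 \<le> \<alpha>" and "\<alpha> < 1" and "0 < R"
  shows "exit_set \<alpha> R xO yO yT (intercept_heading \<theta> t2) = {t2 + 2 * R / (1 - \<alpha>)<..}"
proof -
  have leaves_iff:
    "R\<^sup>2 < sep2 \<alpha> xO yO yT (intercept_heading \<theta> t2) t \<longleftrightarrow> t2 + 2 * R / (1 - \<alpha>) < t"
    if "t2 \<le> t" for t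
  proof -
    have "R\<^sup>2 < (R - (1 - \<alpha>) * (t - t2))\<^sup>2 \<longleftrightarrow> 2 * R < (1 - \<alpha>) * (t - t2)"
      using that assms by (intro square_less_square_diff_iff) auto
    also have "\<dots> \<longleftrightarrow> 2 * R / (1 - \<alpha>) < t - t2"
      using assms(2) by (simp add: pos_divide_less_eq mult.commute)
    also have "\<dots> \<longleftrightarrow> t2 + 2 * R / (1 - \<alpha>) < t"
      by linarith
    finally show ?thesis
      using sep2_intercept_after[OF that] by simp
  qed
  have "0 < 2 * R / (1 - \<alpha>)"
    using assms by simp
  then show ?thesis
    using leaves_iff contact_time_intercept(2)[OF assms(1,2) less_imp_le[OF assms(3)]]
    unfolding exit_set_def by force
qed

lemma obs_time_intercept:
  assumes "0 \<le> \<alpha>" and "\<alpha> < 1" and "0 < R"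
  shows "obs_time \<alpha> R xO yO yT (intercept_heading \<theta> t2) = ereal (2 * R / (1 - \<alpha>))"
  using contact_time_intercept[OF assms(1,2) less_imp_le[OF assms(3)]]
    exit_set_intercept[OF assms] assms(3)
  by (auto simp: obs_time_def exit_time_def)

end

lemma apollonius_root_exists:
  fixes \<alpha> h x :: real
  assumes "0 < \<alpha>" and "\<alpha> < 1" and "sqrt (1 - \<alpha>\<^sup>2) * \<bar>x\<bar> \<le> \<alpha> * h"
  shows "\<exists>t \<ge> 0. x\<^sup>2 + (t - h)\<^sup>2 = (\<alpha> * t)\<^sup>2"
proof -
  define k where "k = 1 - \<alpha>\<^sup>2"
  define D where "D = discrim k (- 2 * h) (x\<^sup>2 + h\<^sup>2)"
  define t where "t = (2 * h - sqrt D) / (2 * k)"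
  have k: "0 < k"
    using assms(1,2) by (simp add: k_def power_less_one_iff)
  have "0 \<le> sqrt k * \<bar>x\<bar>"
    using k by simp
  then have "0 \<le> \<alpha> * h"
    using assms(3) unfolding k_def by linarith
  then have h: "0 \<le> h"
    using assms(1) by (simp add: zero_le_mult_iff)
  have "(sqrt k * \<bar>x\<bar>)\<^sup>2 \<le> (\<alpha> * h)\<^sup>2"
    using assms(3) k by (intro power_mono) (auto simp: k_def)
  then have "k * x\<^sup>2 \<le> \<alpha>\<^sup>2 * h\<^sup>2"
    using k by (simp add: power_mult_distrib)
  moreover have "D = 4 * (\<alpha>\<^sup>2 * h\<^sup>2 - k * x\<^sup>2)"
    by (simp add: D_def discrim_def k_def power2_eq_square algebra_simps)
  ultimately have D: "0 \<le> D"
    by simp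
  have "D \<le> (2 * h)\<^sup>2"
    using k by (simp add: D_def discrim_def)
  then have "sqrt D \<le> sqrt ((2 * h)\<^sup>2)"
    by (rule real_sqrt_le_mono)
  also have "\<dots> = 2 * h"
    using h by (simp only: real_sqrt_abs abs_of_nonneg)
  finally have "sqrt D \<le> 2 * h" .
  then have "0 \<le> t"
    using k by (simp add: t_def)
  moreover have "k * t\<^sup>2 + (- 2 * h) * t + (x\<^sup>2 + h\<^sup>2) = 0"
    using discriminant_nonneg[of k "- 2 * h" "x\<^sup>2 + h\<^sup>2" t] k D by (simp add: D_def t_def)
  then have "x\<^sup>2 + (t - h)\<^sup>2 = (\<alpha> * t)\<^sup>2"
    by (simp add: k_def power2_eq_square algebra_simps)
  ultimately show ?thesis by blast
qed

lemma polar_coordinates_exist: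
  fixes u v \<rho> :: real
  assumes "u\<^sup>2 + v\<^sup>2 = \<rho>\<^sup>2" and "0 \<le> \<rho>"
  obtains \<theta> where "\<rho> * cos \<theta> = u" and "\<rho> * sin \<theta> = v"
proof -
  have "cmod (Complex u v) = \<rho>"
    using assms by (simp add: cmod_def)
  then have "rcis \<rho> (Arg (Complex u v)) = Complex u v"
    using rcis_cmod_Arg by metis
  then show ?thesis
    using that[of "Arg (Complex u v)"] by (metis Re_rcis Im_rcis complex.sel)
qed

theorem lemma7:
  fixes \<alpha> R xO yO yT m :: real
  assumes "0 < \<alpha>" and "\<alpha> < 1" and "0 < R"
    and "m = sqrt (1 - \<alpha>\<^sup>2) / \<alpha>"
    and "yO - R - yT \<ge> m * \<bar>xO\<bar>"
  shows "opt_obs_time \<alpha> R xO yO yT = ereal (2 * R / (1 - \<alpha>))"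
proof -
  define h where "h = yO - R - yT"
  have "sqrt (1 - \<alpha>\<^sup>2) * \<bar>xO\<bar> \<le> \<alpha> * h"
    using mult_left_mono[OF assms(5), of \<alpha>] assms(1,4) by (simp add: h_def)
  then obtain t2 where t2: "0 \<le> t2" and "(- xO)\<^sup>2 + (t2 - h)\<^sup>2 = (\<alpha> * t2)\<^sup>2"
    using apollonius_root_exists[OF assms(1,2)] by auto
  then obtain \<theta> where "\<alpha> * t2 * cos \<theta> = - xO" and "\<alpha> * t2 * sin \<theta> = t2 - h"
    using assms(1) by (elim polar_coordinates_exist) auto
  then have attained:
    "obs_time \<alpha> R xO yO yT (intercept_heading \<theta> t2) = ereal (2 * R / (1 - \<alpha>))"
    using t2 assms(1-3) by (intro obs_time_intercept) (auto simp: h_def)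
  show ?thesis
    unfolding opt_obs_time_def
  proof (rule antisym)
    show "(SUP \<psi> \<in> {\<psi>. \<psi> \<in> borel_measurable lborel}. obs_time \<alpha> R xO yO yT \<psi>)
      \<le> ereal (2 * R / (1 - \<alpha>))"
      using obs_time_le assms(1-3) by (auto intro: SUP_least)
    show "ereal (2 * R / (1 - \<alpha>))
      \<le> (SUP \<psi> \<in> {\<psi>. \<psi> \<in> borel_measurable lborel}. obs_time \<alpha> R xO yO yT \<psi>)"
      unfolding attained[symmetric] by (rule SUP_upper) (use intercept_heading_measurable in simp)
  qed
qed

end
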